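(* Let $\delta>0$, let $\ell<\ell'<r'<r$ be real numbers and let $g:[\ell,r]\to\mathbb{R}$ satisfy $|g(x)+\frac12x^2|\leq\frac14\delta^2$ for all $x\in[\ell,r]$. Let $h_1$ and $h_2$ be the concave majorants of $g$ on $[\ell,r]$ and on $[\ell',r']$ respectively. Then $h_1(x)=h_2(x)$ for all $x\in[\ell'+3\delta,r'-3\delta]$.
   Context: The concave majorant of $g$ on an interval $I$ is $h(x_0)=\inf\{ax_0+b: ax+b\geq g(x)\text{ for all }x\in I\}$ for $x_0\in I$. *)

theory Defs
  imports "HOL-Analysis.Analysis"
begin

definition concave_majorant :: "(real \<Rightarrow> real) \<Rightarrow> real set \<Rightarrow> real \<Rightarrow> real" where
  "concave_majorant g I x0 =
     Inf {a * x0 + b | a b. \<forall>x\<in>I. a * x + b \<ge> g x}"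

end

theory Submission
  imports Defs
begin

(* Write f(x) = -x^2/2 and e = delta^2/4, so that f - e <= g <= f + e.  The tangent to f at x0,
   raised by e, dominates g and has value f(x0) + e at x0, so only lines below f(x0) + e at x0
   matter for either majorant.  Such a line, if it stays above f - e on [l',r'], must have its
   gap to the parabola f grow by more than 2e within 3 delta of x0, so it lies above f + e,
   hence above g, outside [l',r'].  Both intervals therefore admit the same relevant lines. *)

lemma bdd_below_dominating_values:
  assumes "x0 \<in> I"
  shows "bdd_below {a * x0 + b | a b. \<forall>x\<in>I. a * x + b \<ge> g x}"
  using assms by (auto intro!: bdd_belowI[of _ "g x0"])

lemma concave_majorant_le_affine:
  assumes "x0 \<in> I" and "\<forall>x\<in>I. a * x + b \<ge> g x"
  shows "concave_majorant g I x0 \<le> a * x0 + b"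
  unfolding concave_majorant_def
  using assms by (intro cInf_lower bdd_below_dominating_values) auto

lemma concave_majorant_greatest:
  assumes "\<forall>x\<in>I. a' * x + b' \<ge> g x"
    and "\<And>a b. \<forall>x\<in>I. a * x + b \<ge> g x \<Longrightarrow> c \<le> a * x0 + b"
  shows "c \<le> concave_majorant g I x0"
  unfolding concave_majorant_def
  using assms by (intro cInf_greatest) auto

lemma concave_majorant_eq_subinterval:
  assumes "x0 \<in> J" and "J \<subseteq> I"
    and dom': "\<forall>x\<in>I. a' * x + b' \<ge> g x"
    and "\<And>a b. \<forall>x\<in>J. a * x + b \<ge> g x \<Longrightarrow> a * x0 + b \<le> a' * x0 + b'
                   \<Longrightarrow> \<forall>x\<in>I. a * x + b \<ge> g x"
  shows "concave_majorant g I x0 = concave_majorant g J x0"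
proof (rule antisym)
  have dom'_J: "\<forall>x\<in>J. a' * x + b' \<ge> g x"
    using dom' \<open>J \<subseteq> I\<close> by blast
  show "concave_majorant g I x0 \<le> concave_majorant g J x0"
  proof (rule concave_majorant_greatest[OF dom'_J])
    fix a b assume dom: "\<forall>x\<in>J. a * x + b \<ge> g x"
    show "concave_majorant g I x0 \<le> a * x0 + b"
    proof (cases "a * x0 + b \<le> a' * x0 + b'")
      case True
      then show ?thesis
        using assms dom by (intro concave_majorant_le_affine) auto
    next
      case False
      moreover have "concave_majorant g I x0 \<le> a' * x0 + b'"
        using assms by (intro concave_majorant_le_affine) auto
      ultimately show ?thesis by linarith
    qed
  qed
  show "concave_majorant g J x0 \<le> concave_majorant g I x0"
    using assms by (intro concave_majorant_greatest[OF dom'] concave_majorant_le_affine) auto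
qed

lemma tangent_above_neg_square:
  fixes x x0 :: real
  shows "- (x\<^sup>2 / 2) \<le> - x0 * x + x0\<^sup>2 / 2"
  using zero_le_power2[of "x - x0"] by (simp add: power2_eq_square algebra_simps)

lemma affine_above_neg_square_right:
  fixes a b x0 x \<delta> :: real
  assumes "\<delta> > 0"
    and at_x0: "a * x0 + b \<le> - (x0\<^sup>2 / 2) + \<delta>\<^sup>2 / 4"
    and at_y: "a * (x0 + 2 * \<delta>) + b \<ge> - ((x0 + 2 * \<delta>)\<^sup>2 / 2) - \<delta>\<^sup>2 / 4"
    and "x0 + 3 * \<delta> \<le> x"
  shows "a * x + b \<ge> - (x\<^sup>2 / 2) + \<delta>\<^sup>2 / 4"
proof -
  define q where "q t = a * t + b + t\<^sup>2 / 2" for t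
  define y where "y = x0 + 2 * \<delta>"
  have q_y: "q y \<ge> - (\<delta>\<^sup>2 / 4)"
    using at_y unfolding q_def y_def by linarith
  \<comment> \<open>\<open>a + x0 + \<delta>\<close> is the slope of \<open>q\<close> at \<open>x0 + \<delta>\<close>; it is bounded below by the values at \<open>x0\<close> and \<open>y\<close>.\<close>
  have "q y - q x0 = 2 * \<delta> * (a + x0 + \<delta>)"
    unfolding q_def y_def by (simp add: power2_eq_square field_simps)
  moreover have "q y - q x0 \<ge> 2 * \<delta> * (- \<delta> / 4)"
    using q_y at_x0 unfolding q_def by (simp add: power2_eq_square)
  ultimately have "2 * \<delta> * (- \<delta> / 4) \<le> 2 * \<delta> * (a + x0 + \<delta>)"
    by linarith
  then have "- \<delta> / 4 \<le> a + x0 + \<delta>"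
    by (rule mult_left_le_imp_le) (use \<open>\<delta> > 0\<close> in simp)
  then have "5 * \<delta> / 4 \<le> a + (x + y) / 2"
    using \<open>x0 + 3 * \<delta> \<le> x\<close> unfolding y_def by (simp add: field_simps)
  moreover have "\<delta> \<le> x - y"
    using \<open>x0 + 3 * \<delta> \<le> x\<close> unfolding y_def by linarith
  ultimately have "\<delta> * (5 * \<delta> / 4) \<le> (x - y) * (a + (x + y) / 2)"
    using \<open>\<delta> > 0\<close> by (intro mult_mono) auto
  moreover have "q x = q y + (x - y) * (a + (x + y) / 2)"
    unfolding q_def by (simp add: power2_eq_square field_simps)
  ultimately have "q x \<ge> \<delta>\<^sup>2"
    using q_y by (simp add: power2_eq_square)
  then show ?thesis
    using zero_le_power2[of \<delta>] unfolding q_def by linarith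
qed

lemma affine_above_neg_square_left:
  fixes a b x0 x \<delta> :: real
  assumes "\<delta> > 0"
    and "a * x0 + b \<le> - (x0\<^sup>2 / 2) + \<delta>\<^sup>2 / 4"
    and "a * (x0 - 2 * \<delta>) + b \<ge> - ((x0 - 2 * \<delta>)\<^sup>2 / 2) - \<delta>\<^sup>2 / 4"
    and "x \<le> x0 - 3 * \<delta>"
  shows "a * x + b \<ge> - (x\<^sup>2 / 2) + \<delta>\<^sup>2 / 4"
  using affine_above_neg_square_right[of \<delta> "- a" "- x0" b "- x"] assms
  by (simp add: power2_eq_square algebra_simps)

lemma affine_above_neg_square_outside:
  fixes a b x0 x \<delta> l r :: real
  assumes "\<delta> > 0" and "x0 \<in> {l + 3 * \<delta> .. r - 3 * \<delta>}"
    and "a * x0 + b \<le> - (x0\<^sup>2 / 2) + \<delta>\<^sup>2 / 4"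
    and inside: "\<forall>y\<in>{l..r}. a * y + b \<ge> - (y\<^sup>2 / 2) - \<delta>\<^sup>2 / 4"
    and "x \<notin> {l..r}"
  shows "a * x + b \<ge> - (x\<^sup>2 / 2) + \<delta>\<^sup>2 / 4"
proof (cases "x < l")
  case True
  have "x0 - 2 * \<delta> \<in> {l..r}"
    using assms(1,2) by auto
  then show ?thesis
    using affine_above_neg_square_left[OF assms(1,3) inside[rule_format]] assms(2) True by auto
next
  case False
  have "x0 + 2 * \<delta> \<in> {l..r}"
    using assms(1,2) by auto
  then show ?thesis
    using affine_above_neg_square_right[OF assms(1,3) inside[rule_format]] assms(2,5) False by auto
qed

theorem mainTheorem16:
  fixes \<delta> l l' r' r :: real and g :: "real \<Rightarrow> real"
  assumes "\<delta> > 0"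
    and "l < l'" and "l' < r'" and "r' < r"
    and "\<forall>x\<in>{l..r}. \<bar>g x + x\<^sup>2 / 2\<bar> \<le> \<delta>\<^sup>2 / 4"
  shows "\<forall>x\<in>{l' + 3 * \<delta> .. r' - 3 * \<delta>}.
           concave_majorant g {l..r} x = concave_majorant g {l'..r'} x"
proof
  fix x0 assume x0: "x0 \<in> {l' + 3 * \<delta> .. r' - 3 * \<delta>}"
  have band: "- (x\<^sup>2 / 2) - \<delta>\<^sup>2 / 4 \<le> g x \<and> g x \<le> - (x\<^sup>2 / 2) + \<delta>\<^sup>2 / 4" if "x \<in> {l..r}" for x
    using bspec[OF assms(5) that] unfolding abs_le_iff by linarith
  show "concave_majorant g {l..r} x0 = concave_majorant g {l'..r'} x0"
  proof (rule concave_majorant_eq_subinterval[where a' = "- x0" and b' = "x0\<^sup>2 / 2 + \<delta>\<^sup>2 / 4"])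
    show "\<forall>x\<in>{l..r}. - x0 * x + (x0\<^sup>2 / 2 + \<delta>\<^sup>2 / 4) \<ge> g x"
      using band tangent_above_neg_square[of _ x0] by (smt (verit))
  next
    fix a b assume dom: "\<forall>x\<in>{l'..r'}. a * x + b \<ge> g x"
      and "a * x0 + b \<le> - x0 * x0 + (x0\<^sup>2 / 2 + \<delta>\<^sup>2 / 4)"
    then have "a * x0 + b \<le> - (x0\<^sup>2 / 2) + \<delta>\<^sup>2 / 4"
      by (simp add: power2_eq_square)
    moreover have "\<forall>y\<in>{l'..r'}. a * y + b \<ge> - (y\<^sup>2 / 2) - \<delta>\<^sup>2 / 4"
    proof
      fix y assume "y \<in> {l'..r'}"
      then show "a * y + b \<ge> - (y\<^sup>2 / 2) - \<delta>\<^sup>2 / 4"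
        using dom band[of y] assms(2,4) by force
    qed
    ultimately have "a * x + b \<ge> g x" if "x \<in> {l..r} - {l'..r'}" for x
      using affine_above_neg_square_outside[OF \<open>\<delta> > 0\<close> x0, of a b x] band that by force
    then show "\<forall>x\<in>{l..r}. a * x + b \<ge> g x"
      using dom by blast
  qed (use x0 assms in auto)
qed

end
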